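(* Let $K$ be a compact Hausdorff space. A one-dimensional real Banach space can be U-embedded into $C(K)$ if and only if $K$ contains at least one $G_\delta$-point, i.e. a point $p$ such that $\{p\}$ is a $G_\delta$-subset of $K$.
   Context: $C(K)$ carries the sup norm. A linear isometry $T\colon X\to Y$ is a U-embedding if every $x^*\in X^*$ has a unique $y^*\in Y^*$ with $T^*(y^* )=x^*$ and $\|y^*\|=\|x^*\|$. *)

theory Defs
  imports "HOL-Analysis.Analysis"
begin

definition linear_isometry :: "('a::real_normed_vector \<Rightarrow> 'b::real_normed_vector) \<Rightarrow> bool" where
  "linear_isometry T \<longleftrightarrow> linear T \<and> (\<forall>x. norm (T x) = norm x)"

definition U_embedding :: "('a::real_normed_vector \<Rightarrow> 'b::real_normed_vector) \<Rightarrow> bool" where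
  "U_embedding T \<longleftrightarrow> linear_isometry T \<and>
     (\<forall>xs :: 'a \<Rightarrow>\<^sub>L real. \<exists>!ys :: 'b \<Rightarrow>\<^sub>L real.
        (\<forall>x. blinfun_apply ys (T x) = blinfun_apply xs x) \<and> norm ys = norm xs)"

end

theory Submission
  imports Defs
begin

text \<open>A one-dimensional space is the line through a unit vector e, so a linear isometry T into
  C(K) is determined by the norm-one function f = T e, and T is a U-embedding exactly when f has a
  unique norming functional (a functional of norm 1 with value 1 at f). In C(K) every point q with
  |f q| = 1 yields the norming functional f(q) point_eval q, and distinct points yield distinct
  functionals by Urysohn's lemma; conversely, if |f| attains 1 only at q, perturbing f by small
  multiples of functions vanishing at q shows that every norming functional is f(q) point_eval q.
  So U-embeddings correspond to functions f for which |f| peaks at a single point q. Such a q is a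
  G-delta point, {q} being the intersection of the open sets where |f| > 1 - 1/(n+1); conversely a
  G-delta point p carries such a peak function, the sum of 2^-(n+1) h n over Urysohn functions h n
  that equal 1 at p and vanish off open sets shrinking to p.\<close>

lemma Hausdorff_space_euclidean_t2: "Hausdorff_space (euclidean :: 'a::t2_space topology)"
  unfolding Hausdorff_space_def disjnt_def by (metis hausdorff open_openin)

lemma compact_t2_imp_normal_space:
  assumes "compact (UNIV :: 'a::t2_space set)"
  shows "normal_space (euclidean :: 'a topology)"
  by (metis compact_Hausdorff_or_regular_imp_normal_space Hausdorff_space_euclidean_t2
      assms compact_space_def compactin_euclidean_iff topspace_euclidean)

lemma Urysohn_point_bcontfun:
  fixes p :: "'a::t1_space"
  assumes "normal_space (euclidean :: 'a topology)" "closed S" "p \<notin> S"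
  obtains g :: "'a \<Rightarrow>\<^sub>C real"
  where "g p = 1" "\<And>x. x \<in> S \<Longrightarrow> g x = 0" "\<And>x. 0 \<le> g x \<and> g x \<le> 1"
proof -
  obtain h where h: "continuous_map euclidean (top_of_set {0..1::real}) h"
    "h ` S \<subseteq> {0}" "h ` {p} \<subseteq> {1}"
    using Urysohn_lemma[OF assms(1), of S "{p}" 0 1] assms by (auto simp: disjnt_def)
  then have cont: "continuous_on UNIV h" and range: "\<And>x. 0 \<le> h x \<and> h x \<le> 1"
    by (auto simp: continuous_map_in_subtopology continuous_map_iff_continuous[of UNIV, simplified])
  then have "apply_bcontfun (Bcontfun h) = h"
    by (intro Bcontfun_inverse bcontfun_normI[where b=1]) auto
  with h range show ?thesis
    using that[of "Bcontfun h"] by auto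
qed

lemma bcontfun_attains_norm:
  fixes f :: "'a::topological_space \<Rightarrow>\<^sub>C 'b::real_normed_vector"
  assumes "compact (UNIV :: 'a set)"
  obtains q where "norm (f q) = norm f"
proof -
  obtain q where q: "\<And>x. norm (f x) \<le> norm (f q)"
    using continuous_attains_sup[OF assms, of "\<lambda>x. norm (f x)"]
    by (auto intro: continuous_intros)
  then have "norm f \<le> norm (f q)"
    by (rule norm_bound)
  with norm_bounded[of f q] show ?thesis
    using that by simp
qed

lemma gdelta_in_le_preimage:
  fixes g :: "'a::topological_space \<Rightarrow> real"
  assumes "continuous_on UNIV g"
  shows "gdelta_in euclidean {x. c \<le> g x}"
proof -
  define U where "U n = {x. c - inverse (Suc n) < g x}" for n :: nat
  have level_set: "{x. c \<le> g x} = \<Inter>(range U)"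
  proof (intro set_eqI iffI)
    fix x assume "x \<in> \<Inter>(range U)"
    then have "x \<in> U n" for n
      by blast
    then have close: "c - g x < inverse (Suc n)" for n
      by (simp add: U_def algebra_simps)
    show "x \<in> {x. c \<le> g x}"
    proof (rule ccontr)
      assume "x \<notin> {x. c \<le> g x}"
      then obtain n where "inverse (Suc n) < c - g x"
        using reals_Archimedean[of "c - g x"] by auto
      with close[of n] show False
        by linarith
    qed
  qed (auto simp: U_def add_pos_nonneg intro: less_le_trans[of _ c])
  have "open (U n)" for n
    unfolding U_def using assms by (intro open_Collect_less continuous_intros) auto
  then have "gdelta_in euclidean (U n)" for n
    by (metis open_openin open_imp_gdelta_in)
  then show ?thesis
    unfolding level_set by (intro gdelta_in_Inter) auto
qed

lemma abs_bcontfun_le_norm: "\<bar>apply_bcontfun f x\<bar> \<le> norm (f :: 'a::topological_space \<Rightarrow>\<^sub>C real)"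
  using norm_bounded[of f x] by simp

lemma gdelta_in_unique_peak:
  fixes f :: "'a::topological_space \<Rightarrow>\<^sub>C real"
  assumes "norm f = 1" and "\<And>x. \<bar>f x\<bar> = 1 \<longleftrightarrow> x = q"
  shows "gdelta_in euclidean {q}"
proof -
  have "1 \<le> \<bar>f x\<bar> \<longleftrightarrow> \<bar>f x\<bar> = 1" for x
    using abs_bcontfun_le_norm[of f x] assms(1) by linarith
  with assms(2) have "{x. 1 \<le> \<bar>f x\<bar>} = {q}"
    by blast
  moreover have "continuous_on UNIV (\<lambda>x. \<bar>f x\<bar>)"
    by (intro continuous_intros) simp
  ultimately show ?thesis
    using gdelta_in_le_preimage[of "\<lambda>x. \<bar>f x\<bar>" 1] by simp
qed

definition point_eval :: "'a::topological_space \<Rightarrow> ('a \<Rightarrow>\<^sub>C real) \<Rightarrow>\<^sub>L real" where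
  "point_eval p = Blinfun (\<lambda>f :: 'a \<Rightarrow>\<^sub>C real. f p)"

lemma point_eval_apply [simp]: "point_eval p f = f p"
proof -
  have "bounded_linear (\<lambda>f :: 'a \<Rightarrow>\<^sub>C real. f p)"
    by (rule bounded_linear_intro[where K=1]) (auto intro: abs_bcontfun_le_norm)
  then show ?thesis
    by (simp add: point_eval_def bounded_linear_Blinfun_apply)
qed

lemma norm_point_eval [simp]: "norm (point_eval p) = 1"
proof (rule antisym)
  show "norm (point_eval p) \<le> 1"
    by (rule norm_blinfun_bound) (auto intro: abs_bcontfun_le_norm)
  have "1 = norm (point_eval p (const_bcontfun 1))"
    by simp
  also have "\<dots> \<le> norm (point_eval p) * norm (const_bcontfun 1 :: 'a \<Rightarrow>\<^sub>C real)"
    by (rule norm_blinfun)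
  also have "\<dots> \<le> norm (point_eval p)"
    using norm_bound[of "const_bcontfun 1 :: 'a \<Rightarrow>\<^sub>C real" 1] by (simp add: mult_left_le)
  finally show "1 \<le> norm (point_eval p)" .
qed

text \<open>Where h is not small, compactness keeps f below 1 by a uniform margin, and that margin
  absorbs a small enough multiple of h.\<close>

lemma norm_peak_perturbation_le:
  fixes f h :: "'a::topological_space \<Rightarrow>\<^sub>C real"
  assumes "compact (UNIV :: 'a set)" and "f p = 1" and peak: "\<And>x. x \<noteq> p \<Longrightarrow> \<bar>f x\<bar> < 1"
    and "h p = 0" and "\<epsilon> > 0"
  obtains t where "t > 0" "\<And>s. \<bar>s\<bar> \<le> t \<Longrightarrow> norm (f + s *\<^sub>R h) \<le> 1 + t * \<epsilon>"
proof -
  define U where "U = {x. \<bar>h x\<bar> < \<epsilon>}"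
  have "open U"
    unfolding U_def by (intro open_Collect_less continuous_intros) auto
  then have "compact (- U)"
    using assms(1) by (simp add: closed_Compl compact_Int_closed[of UNIV "- U", simplified])
  have "p \<in> U"
    using assms by (simp add: U_def)
  obtain d where "d > 0" and margin: "\<And>x. x \<notin> U \<Longrightarrow> \<bar>f x\<bar> \<le> 1 - d"
  proof (cases "U = UNIV")
    case False
    then obtain x0 where "x0 \<notin> U" and x0: "\<And>x. x \<notin> U \<Longrightarrow> \<bar>f x\<bar> \<le> \<bar>f x0\<bar>"
      using continuous_attains_sup[OF \<open>compact (- U)\<close>, of "\<lambda>x. \<bar>f x\<bar>"]
      by (auto intro: continuous_intros)
    with \<open>p \<in> U\<close> have "\<bar>f x0\<bar> < 1"
      by (metis peak)
    with x0 show ?thesis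
      using that[of "1 - \<bar>f x0\<bar>"] by auto
  qed (use that[of 1] in auto)
  define t where "t = d / (norm h + 1)"
  have "t > 0"
    using \<open>d > 0\<close> by (simp add: t_def add_nonneg_pos)
  have "t * norm h \<le> d"
    using \<open>d > 0\<close> by (simp add: t_def divide_le_eq add_nonneg_pos)
  have "norm (f + s *\<^sub>R h) \<le> 1 + t * \<epsilon>" if "\<bar>s\<bar> \<le> t" for s
  proof (rule norm_bound)
    fix x
    have sh: "\<bar>s * h x\<bar> \<le> t * \<bar>h x\<bar>"
      using that by (simp add: abs_mult mult_right_mono)
    have "\<bar>f x\<bar> \<le> 1"
      using assms(2) peak[of x] by (cases "x = p") auto
    moreover have "\<bar>s * h x\<bar> \<le> d"
      using sh mult_left_mono[OF abs_bcontfun_le_norm[of h x], of t] \<open>t > 0\<close> \<open>t * norm h \<le> d\<close>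
      by linarith
    moreover have "\<bar>s * h x\<bar> \<le> t * \<epsilon>" if "x \<in> U"
    proof -
      have "\<bar>h x\<bar> \<le> \<epsilon>"
        using that by (simp add: U_def)
      with sh mult_left_mono[of "\<bar>h x\<bar>" \<epsilon> t] \<open>t > 0\<close> show ?thesis
        by linarith
    qed
    moreover have "0 < t * \<epsilon>"
      using \<open>t > 0\<close> \<open>\<epsilon> > 0\<close> by simp
    ultimately have "\<bar>f x\<bar> + \<bar>s * h x\<bar> \<le> 1 + t * \<epsilon>"
      using margin[of x] by (cases "x \<in> U") linarith+
    then show "norm ((f + s *\<^sub>R h) x) \<le> 1 + t * \<epsilon>"
      using abs_triangle_ineq[of "f x" "s * h x"] by simp
  qed
  with \<open>t > 0\<close> show ?thesis
    using that by blast
qed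

lemma norming_functional_at_peak_eq_point_eval:
  fixes f :: "'a::topological_space \<Rightarrow>\<^sub>C real" and \<phi> :: "('a \<Rightarrow>\<^sub>C real) \<Rightarrow>\<^sub>L real"
  assumes "compact (UNIV :: 'a set)" and "f p = 1" and "\<And>x. x \<noteq> p \<Longrightarrow> \<bar>f x\<bar> < 1"
    and "norm \<phi> \<le> 1" and "\<phi> f = 1"
  shows "\<phi> = point_eval p"
proof -
  have vanish: "\<phi> h = 0" if "h p = 0" for h :: "'a \<Rightarrow>\<^sub>C real"
  proof -
    have "\<bar>\<phi> h\<bar> \<le> 0 + \<epsilon>" if "\<epsilon> > 0" for \<epsilon>
    proof -
      obtain t where "t > 0" and small: "\<And>s. \<bar>s\<bar> \<le> t \<Longrightarrow> norm (f + s *\<^sub>R h) \<le> 1 + t * \<epsilon>"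
        using norm_peak_perturbation_le[OF assms(1-3) \<open>h p = 0\<close> \<open>\<epsilon> > 0\<close>] by blast
      have bound: "s * \<phi> h \<le> t * \<epsilon>" if "\<bar>s\<bar> \<le> t" for s
      proof -
        have "1 + s * \<phi> h = \<phi> (f + s *\<^sub>R h)"
          using assms(5) by (simp add: blinfun.add_right blinfun.scaleR_right)
        also have "\<dots> \<le> norm \<phi> * norm (f + s *\<^sub>R h)"
          using norm_blinfun[of \<phi> "f + s *\<^sub>R h"] by simp
        also have "\<dots> \<le> 1 + t * \<epsilon>"
          using mult_mono[OF assms(4) small[OF that]] by simp
        finally show ?thesis
          by simp
      qed
      have "t * \<phi> h \<le> t * \<epsilon>" "t * (- \<phi> h) \<le> t * \<epsilon>"
        using bound[of t] bound[of "- t"] \<open>t > 0\<close> by simp_all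
      then show ?thesis
        unfolding mult_le_cancel_left_pos[OF \<open>t > 0\<close>] by linarith
    qed
    then have "\<bar>\<phi> h\<bar> \<le> 0"
      by (rule field_le_epsilon)
    then show ?thesis
      by simp
  qed
  show ?thesis
  proof (rule blinfun_eqI)
    fix g :: "'a \<Rightarrow>\<^sub>C real"
    have "\<phi> (g - g p *\<^sub>R f) = 0"
      by (rule vanish) (simp add: assms(2))
    then show "\<phi> g = point_eval p g"
      using assms(5) by (simp add: blinfun.diff_right blinfun.scaleR_right)
  qed
qed

lemma point_eval_scaleR_norming:
  fixes f :: "'a::topological_space \<Rightarrow>\<^sub>C real"
  assumes "\<bar>f q\<bar> = 1"
  shows "norm (f q *\<^sub>R point_eval q) = 1" and "(f q *\<^sub>R point_eval q) f = 1"
  using assms abs_mult_self_eq[of "f q"] by (simp_all add: scaleR_blinfun.rep_eq)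

lemma ex1_peak_if_ex1_norming_functional:
  fixes f :: "'a::t2_space \<Rightarrow>\<^sub>C real"
  assumes "compact (UNIV :: 'a set)" and "norm f = 1"
    and unique: "\<exists>!\<phi> :: ('a \<Rightarrow>\<^sub>C real) \<Rightarrow>\<^sub>L real. norm \<phi> = 1 \<and> blinfun_apply \<phi> f = 1"
  shows "\<exists>!q. \<bar>f q\<bar> = 1"
proof -
  obtain q where q: "\<bar>f q\<bar> = 1"
    using bcontfun_attains_norm[OF assms(1), of f] assms(2) by auto
  moreover have "r = q" if "\<bar>f r\<bar> = 1" for r
  proof (rule ccontr)
    assume "r \<noteq> q"
    then obtain g :: "'a \<Rightarrow>\<^sub>C real" where "g q = 1" "g r = 0"
      using Urysohn_point_bcontfun[OF compact_t2_imp_normal_space[OF assms(1)], of "{r}" q]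
      by auto
    have "f r *\<^sub>R point_eval r = f q *\<^sub>R point_eval q"
      using unique[unfolded ex1_iff_ex_Uniq] point_eval_scaleR_norming[OF that] point_eval_scaleR_norming[OF q]
      by (auto intro: Uniq_D)
    then have "(f r *\<^sub>R point_eval r) g = (f q *\<^sub>R point_eval q) g"
      by simp
    with \<open>g q = 1\<close> \<open>g r = 0\<close> q show False
      by (simp add: scaleR_blinfun.rep_eq)
  qed
  ultimately show ?thesis
    by blast
qed

lemma ex1_norming_functional_if_ex1_peak:
  fixes f :: "'a::topological_space \<Rightarrow>\<^sub>C real"
  assumes "compact (UNIV :: 'a set)" and "norm f = 1" and "\<exists>!q. \<bar>f q\<bar> = 1"
  shows "\<exists>!\<phi> :: ('a \<Rightarrow>\<^sub>C real) \<Rightarrow>\<^sub>L real. norm \<phi> = 1 \<and> blinfun_apply \<phi> f = 1"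
proof -
  obtain q where q: "\<bar>f q\<bar> = 1" and only_q: "\<And>x. \<bar>f x\<bar> = 1 \<Longrightarrow> x = q"
    using assms(3) by blast
  have sign_square: "f q * f q = 1"
    using q abs_mult_self_eq[of "f q"] by simp
  show ?thesis
  proof (rule ex1I[of _ "f q *\<^sub>R point_eval q"])
    show "norm (f q *\<^sub>R point_eval q) = 1 \<and> (f q *\<^sub>R point_eval q) f = 1"
      using point_eval_scaleR_norming[OF q] by blast
  next
    fix \<phi> :: "('a \<Rightarrow>\<^sub>C real) \<Rightarrow>\<^sub>L real"
    assume \<phi>: "norm \<phi> = 1 \<and> \<phi> f = 1"
    txt \<open>Multiplying by the sign of f at q turns f into a function peaking at q.\<close>
    have "f q *\<^sub>R \<phi> = point_eval q"
    proof (rule norming_functional_at_peak_eq_point_eval[OF assms(1)])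
      show "(f q *\<^sub>R f) q = 1"
        using sign_square by simp
      show "\<bar>(f q *\<^sub>R f) x\<bar> < 1" if "x \<noteq> q" for x
        using q only_q[of x] that abs_bcontfun_le_norm[of f x] assms(2) by (auto simp: abs_mult order_less_le)
      show "norm (f q *\<^sub>R \<phi>) \<le> 1"
        using q \<phi> by simp
      show "(f q *\<^sub>R \<phi>) (f q *\<^sub>R f) = 1"
        using sign_square \<phi> by (simp add: scaleR_blinfun.rep_eq blinfun.scaleR_right)
    qed
    then show "\<phi> = f q *\<^sub>R point_eval q"
      using sign_square by (metis scaleR_scaleR scaleR_one)
  qed
qed

lemma continuous_on_suminf_bcontfun:
  fixes h :: "nat \<Rightarrow> 'a::topological_space \<Rightarrow>\<^sub>C 'b::banach"
  assumes "summable (\<lambda>n. norm (h n))"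
  shows "continuous_on UNIV (\<lambda>x. \<Sum>n. h n x)"
proof (rule uniform_limit_theorem)
  show "uniform_limit UNIV (\<lambda>n x. \<Sum>i<n. h i x) (\<lambda>x. \<Sum>n. h n x) sequentially"
    by (rule Weierstrass_m_test[OF norm_bounded assms])
qed (auto intro!: always_eventually continuous_intros)

lemma peak_bcontfun_of_continuous:
  fixes F :: "'a::topological_space \<Rightarrow> real"
  assumes "continuous_on UNIV F" and "F p = 1" and "\<And>x. 0 \<le> F x" and "\<And>x. x \<noteq> p \<Longrightarrow> F x < 1"
  obtains f :: "'a \<Rightarrow>\<^sub>C real" where "norm f = 1" "\<And>x. \<bar>f x\<bar> = 1 \<longleftrightarrow> x = p"
proof -
  have peak: "\<bar>F x\<bar> = 1 \<longleftrightarrow> x = p" and bounded: "\<bar>F x\<bar> \<le> 1" for x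
    using assms(2) assms(3)[of x] assms(4)[of x] by (cases "x = p"; simp)+
  have F: "apply_bcontfun (Bcontfun F) = F"
    using assms(1) bounded by (intro Bcontfun_inverse bcontfun_normI[where b=1]) simp_all
  have "norm (Bcontfun F) = 1"
  proof (rule antisym)
    show "norm (Bcontfun F) \<le> 1"
      using bounded by (intro norm_bound) (simp add: F)
    show "1 \<le> norm (Bcontfun F)"
      using abs_bcontfun_le_norm[of "Bcontfun F" p] assms(2) by (simp add: F)
  qed
  with peak show ?thesis
    using that[of "Bcontfun F"] by (simp add: F)
qed

text \<open>The weights 2^-(n+1) sum to 1, so the series attains 1 only where every g n does.\<close>

lemma peak_bcontfun_from_sequence:
  fixes g :: "nat \<Rightarrow> 'a::topological_space \<Rightarrow>\<^sub>C real"
  assumes g_p: "\<And>n. g n p = 1" and g_range: "\<And>n x. 0 \<le> g n x \<and> g n x \<le> 1"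
    and separating: "\<And>x. x \<noteq> p \<Longrightarrow> \<exists>n. g n x < 1"
  obtains f :: "'a \<Rightarrow>\<^sub>C real" where "norm f = 1" "\<And>x. \<bar>f x\<bar> = 1 \<longleftrightarrow> x = p"
proof -
  define w :: "nat \<Rightarrow> real" where "w n = (1/2) ^ Suc n" for n
  define h where "h n = w n *\<^sub>R g n" for n
  define F where "F x = (\<Sum>n. h n x)" for x
  have "w sums 1"
    unfolding w_def by (rule power_half_series)
  then have "summable w"
    by (rule sums_summable)
  have "0 < w n" for n
    by (simp add: w_def)
  have "norm (g n) \<le> 1" for n
    using g_range by (intro norm_bound) (simp add: abs_le_iff)
  then have "norm (h n) \<le> w n" for n
    using mult_left_mono[of "norm (g n)" 1 "w n"] \<open>0 < w n\<close> by (simp add: h_def)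
  then have "summable (\<lambda>n. norm (h n))"
    by (intro summable_comparison_test'[OF \<open>summable w\<close>]) simp
  then have "continuous_on UNIV F"
    unfolding F_def by (rule continuous_on_suminf_bcontfun)
  have summable_h: "summable (\<lambda>n. h n x)" for x
    using \<open>\<And>n. norm (h n) \<le> w n\<close> abs_bcontfun_le_norm
    by (intro summable_comparison_test'[OF \<open>summable w\<close>]) (auto intro: order_trans)
  have "F p = 1"
    using \<open>w sums 1\<close> by (simp add: F_def h_def g_p sums_iff)
  have "0 \<le> F x" for x
    unfolding F_def using summable_h g_range by (intro suminf_nonneg) (auto simp: h_def w_def)
  have "F x < 1" if "x \<noteq> p" for x
  proof -
    obtain n where "g n x < 1"
      using separating[OF \<open>x \<noteq> p\<close>] by blast
    have "1 - F x = (\<Sum>n. w n - h n x)"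
      using suminf_diff[OF \<open>summable w\<close> summable_h[of x]] \<open>w sums 1\<close> by (simp add: F_def sums_iff)
    also have "\<dots> > 0"
    proof (subst suminf_pos_iff)
      show "summable (\<lambda>n. w n - h n x)"
        using \<open>w sums 1\<close> summable_h[of x] by (intro summable_diff) (auto simp: sums_iff)
      show "0 \<le> w n - h n x" for n
        using g_range[of n x] by (simp add: h_def w_def mult_left_le)
      show "\<exists>i. 0 < w i - h i x"
        using \<open>g n x < 1\<close> \<open>0 < w n\<close> by (intro exI[of _ n]) (simp add: h_def)
    qed
    finally show ?thesis
      by simp
  qed
  with \<open>continuous_on UNIV F\<close> \<open>F p = 1\<close> \<open>\<And>x. 0 \<le> F x\<close> show ?thesis
    using peak_bcontfun_of_continuous that by blast
qed

lemma peak_bcontfun_at_gdelta_point: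
  fixes p :: "'a::t1_space"
  assumes "normal_space (euclidean :: 'a topology)" and "gdelta_in euclidean {p}"
  obtains f :: "'a \<Rightarrow>\<^sub>C real" where "norm f = 1" "\<And>x. \<bar>f x\<bar> = 1 \<longleftrightarrow> x = p"
proof -
  obtain U :: "nat \<Rightarrow> 'a set" where "\<And>n. openin euclidean (U n)" and U: "\<Inter>(range U) = {p}"
    using assms(2) unfolding gdelta_in_descending by metis
  then have "closed (- U n)" "p \<notin> - U n" for n
    by (auto simp: open_openin[symmetric] closed_Compl)
  have "\<forall>n. \<exists>g :: 'a \<Rightarrow>\<^sub>C real. g p = 1 \<and> (\<forall>x. x \<notin> U n \<longrightarrow> g x = 0) \<and> (\<forall>x. 0 \<le> g x \<and> g x \<le> 1)"
  proof
    fix n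
    obtain g :: "'a \<Rightarrow>\<^sub>C real" where "g p = 1" "\<And>x. x \<in> - U n \<Longrightarrow> g x = 0" "\<And>x. 0 \<le> g x \<and> g x \<le> 1"
      using Urysohn_point_bcontfun[OF assms(1) \<open>closed (- U n)\<close> \<open>p \<notin> - U n\<close>] by blast
    then show "\<exists>g :: 'a \<Rightarrow>\<^sub>C real. g p = 1 \<and> (\<forall>x. x \<notin> U n \<longrightarrow> g x = 0) \<and> (\<forall>x. 0 \<le> g x \<and> g x \<le> 1)"
      by auto
  qed
  from choice[OF this] obtain g :: "nat \<Rightarrow> 'a \<Rightarrow>\<^sub>C real"
    where g: "\<forall>n. g n p = 1 \<and> (\<forall>x. x \<notin> U n \<longrightarrow> g n x = 0) \<and> (\<forall>x. 0 \<le> g n x \<and> g n x \<le> 1)"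
    by blast
  then have g_p: "\<And>n. g n p = 1" and g_range: "\<And>n x. 0 \<le> g n x \<and> g n x \<le> 1"
    by blast+
  have "\<exists>n. g n x < 1" if "x \<noteq> p" for x
  proof -
    obtain n where "x \<notin> U n"
      using U \<open>x \<noteq> p\<close> by blast
    with g show ?thesis
      by (intro exI[of _ n]) simp
  qed
  from peak_bcontfun_from_sequence[OF g_p g_range this] show ?thesis
    using that by blast
qed

lemma one_dim_coordinate:
  assumes "dim (UNIV :: 'a set) = 1"
  obtains e :: "'a::real_normed_vector" and c :: "'a \<Rightarrow>\<^sub>L real" where "norm e = 1" "\<And>x. c x *\<^sub>R e = x"
proof -
  obtain B :: "'a set" where B: "independent B" "UNIV \<subseteq> span B" "card B = 1"
    using basis_exists[of "UNIV :: 'a set"] assms by auto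
  then obtain e0 where "B = {e0}"
    by (meson card_1_singletonE)
  with B have "e0 \<noteq> 0" "UNIV \<subseteq> span {e0}"
    by (auto simp: dependent_zero)
  define e where "e = e0 /\<^sub>R norm e0"
  have "norm e = 1" "e \<noteq> 0"
    using \<open>e0 \<noteq> 0\<close> by (auto simp: e_def)
  have unique_coeff: "\<exists>!k. k *\<^sub>R e = x" for x
  proof -
    obtain k where "x = k *\<^sub>R e0"
      using \<open>UNIV \<subseteq> span {e0}\<close> unfolding span_singleton by blast
    then have "x = (k * norm e0) *\<^sub>R e"
      using \<open>e0 \<noteq> 0\<close> by (simp add: e_def)
    with \<open>e \<noteq> 0\<close> show ?thesis
      by auto
  qed
  define c where "c x = (THE k. k *\<^sub>R e = x)" for x
  have c: "c x *\<^sub>R e = x" for x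
    unfolding c_def by (rule theI'[OF unique_coeff])
  have c_eqI: "c x = k" if "k *\<^sub>R e = x" for x k
    unfolding c_def by (rule the1_equality[OF unique_coeff that])
  have "bounded_linear c"
  proof (rule bounded_linear_intro[where K=1])
    show "c (x + y) = c x + c y" for x y
      by (rule c_eqI) (simp add: c scaleR_add_left)
    show "c (r *\<^sub>R x) = r *\<^sub>R c x" for r x
      by (rule c_eqI) (simp add: c flip: scaleR_scaleR)
    show "norm (c x) \<le> norm x * 1" for x
      using arg_cong[OF c[of x], of norm] \<open>norm e = 1\<close> by simp
  qed
  then show ?thesis
    using that[of e "Blinfun c"] \<open>norm e = 1\<close> c by (simp add: bounded_linear_Blinfun_apply)
qed

lemma coordinate_scaleR_unit:
  assumes "norm e = 1" and "\<And>x. c x *\<^sub>R e = x"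
  shows "c (a *\<^sub>R e) = a"
proof -
  have "e \<noteq> 0"
    using assms(1) by auto
  with assms(2)[of "a *\<^sub>R e"] show ?thesis
    by (simp add: scaleR_cancel_right)
qed

lemma norm_blinfun_one_dim:
  fixes \<psi> :: "'a::real_normed_vector \<Rightarrow>\<^sub>L 'b::real_normed_vector"
  assumes "norm e = 1" and "\<And>x. c x *\<^sub>R e = x"
  shows "norm \<psi> = norm (\<psi> e)"
proof (rule antisym)
  show "norm \<psi> \<le> norm (\<psi> e)"
  proof (rule norm_blinfun_bound)
    fix x
    have "\<psi> x = c x *\<^sub>R \<psi> e"
      using blinfun.scaleR_right[of \<psi> "c x" e] by (simp add: assms(2))
    moreover have "norm x = \<bar>c x\<bar>"
      using arg_cong[OF assms(2)[of x], of norm] by (simp add: assms(1))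
    ultimately show "norm (\<psi> x) \<le> norm (\<psi> e) * norm x"
      by simp
  qed simp
  show "norm (\<psi> e) \<le> norm \<psi>"
    using norm_blinfun[of \<psi> e] assms(1) by simp
qed

lemma linear_isometry_scaleR_coordinate:
  fixes c :: "'a::real_normed_vector \<Rightarrow>\<^sub>L real" and f :: "'b::real_normed_vector"
  assumes "norm e = 1" and "\<And>x. c x *\<^sub>R e = x" and "norm f = 1"
  shows "linear_isometry (\<lambda>x. c x *\<^sub>R f)"
  unfolding linear_isometry_def
proof
  show "linear (\<lambda>x. c x *\<^sub>R f)"
    by (intro bounded_linear.linear bounded_linear_compose[OF bounded_linear_scaleR_left]
        blinfun.bounded_linear_right)
  show "\<forall>x. norm (c x *\<^sub>R f) = norm x"
    using assms by (metis norm_scaleR mult_1_right)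
qed

lemma ex1_norming_functional_scaleR:
  fixes v :: "'b::real_normed_vector"
  assumes "\<exists>!\<phi> :: 'b \<Rightarrow>\<^sub>L real. norm \<phi> = 1 \<and> blinfun_apply \<phi> v = 1"
  shows "\<exists>!\<psi> :: 'b \<Rightarrow>\<^sub>L real. blinfun_apply \<psi> v = a \<and> norm \<psi> = \<bar>a\<bar>"
proof (cases "a = 0")
  case True
  then show ?thesis
    by (intro ex1I[of _ 0]) auto
next
  case False
  from assms obtain \<phi> :: "'b \<Rightarrow>\<^sub>L real" where \<phi>: "norm \<phi> = 1 \<and> \<phi> v = 1"
    by blast
  show ?thesis
  proof (rule ex1I[of _ "a *\<^sub>R \<phi>"])
    show "(a *\<^sub>R \<phi>) v = a \<and> norm (a *\<^sub>R \<phi>) = \<bar>a\<bar>"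
      using \<phi> by (simp add: scaleR_blinfun.rep_eq)
  next
    fix \<psi> :: "'b \<Rightarrow>\<^sub>L real"
    assume "\<psi> v = a \<and> norm \<psi> = \<bar>a\<bar>"
    then have "norm (inverse a *\<^sub>R \<psi>) = 1 \<and> (inverse a *\<^sub>R \<psi>) v = 1"
      using False by (simp add: scaleR_blinfun.rep_eq)
    then have "inverse a *\<^sub>R \<psi> = \<phi>"
      using assms[unfolded ex1_iff_ex_Uniq] \<phi> by (auto intro: Uniq_D)
    then show "\<psi> = a *\<^sub>R \<phi>"
      using False by auto
  qed
qed

lemma U_embedding_one_dim_iff_scaled:
  fixes T :: "'a::real_normed_vector \<Rightarrow> 'b::real_normed_vector" and c :: "'a \<Rightarrow>\<^sub>L real"
  assumes e: "norm e = 1" and c: "\<And>x. c x *\<^sub>R e = x" and T: "linear_isometry T"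
  shows "U_embedding T \<longleftrightarrow>
    (\<forall>a. \<exists>!\<psi> :: 'b \<Rightarrow>\<^sub>L real. blinfun_apply \<psi> (T e) = a \<and> norm \<psi> = \<bar>a\<bar>)"
proof -
  have "linear T"
    using T by (simp add: linear_isometry_def)
  then have T_line: "T x = c x *\<^sub>R T e" for x
    using linear_cmul[of T "c x" e] by (simp add: c)
  have extends_iff: "(\<forall>x. \<psi> (T x) = \<xi> x) \<longleftrightarrow> \<psi> (T e) = \<xi> e"
    for \<psi> :: "'b \<Rightarrow>\<^sub>L real" and \<xi> :: "'a \<Rightarrow>\<^sub>L real"
  proof
    assume "\<psi> (T e) = \<xi> e"
    show "\<forall>x. \<psi> (T x) = \<xi> x"
    proof
      fix x
      have "\<psi> (T x) = c x * \<psi> (T e)"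
        using T_line[of x] by (simp add: blinfun.scaleR_right)
      also have "\<dots> = \<xi> (c x *\<^sub>R e)"
        using \<open>\<psi> (T e) = \<xi> e\<close> by (simp add: blinfun.scaleR_right)
      finally show "\<psi> (T x) = \<xi> x"
        by (simp add: c)
    qed
  qed simp
  have norm_dual: "norm \<xi> = \<bar>\<xi> e\<bar>" for \<xi> :: "'a \<Rightarrow>\<^sub>L real"
    using norm_blinfun_one_dim[OF e c, of \<xi>] by simp
  have "c e = 1"
    using coordinate_scaleR_unit[OF e c, of 1] by simp
  have dual_values: "(\<forall>\<xi> :: 'a \<Rightarrow>\<^sub>L real. P (\<xi> e)) \<longleftrightarrow> (\<forall>a. P a)" for P
  proof
    assume "\<forall>\<xi> :: 'a \<Rightarrow>\<^sub>L real. P (\<xi> e)"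
    then have "P ((a *\<^sub>R c) e)" for a
      by blast
    then show "\<forall>a. P a"
      using \<open>c e = 1\<close> by (simp add: scaleR_blinfun.rep_eq)
  qed simp
  show ?thesis
    using T dual_values[of "\<lambda>a. \<exists>!\<psi> :: 'b \<Rightarrow>\<^sub>L real. blinfun_apply \<psi> (T e) = a \<and> norm \<psi> = \<bar>a\<bar>"]
    by (simp add: U_embedding_def extends_iff norm_dual)
qed

lemma U_embedding_one_dim_iff:
  fixes T :: "'a::real_normed_vector \<Rightarrow> 'b::real_normed_vector" and c :: "'a \<Rightarrow>\<^sub>L real"
  assumes e: "norm e = 1" and c: "\<And>x. c x *\<^sub>R e = x" and T: "linear_isometry T"
  shows "U_embedding T \<longleftrightarrow> (\<exists>!\<phi> :: 'b \<Rightarrow>\<^sub>L real. norm \<phi> = 1 \<and> blinfun_apply \<phi> (T e) = 1)"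
  unfolding U_embedding_one_dim_iff_scaled[OF e c T]
proof
  assume "\<forall>a. \<exists>!\<psi> :: 'b \<Rightarrow>\<^sub>L real. blinfun_apply \<psi> (T e) = a \<and> norm \<psi> = \<bar>a\<bar>"
  from this[rule_format, of 1] show "\<exists>!\<phi> :: 'b \<Rightarrow>\<^sub>L real. norm \<phi> = 1 \<and> blinfun_apply \<phi> (T e) = 1"
    by (simp add: conj_commute)
qed (use ex1_norming_functional_scaleR in blast)

theorem corollary6p29:
  assumes "compact (UNIV :: 'k::t2_space set)"
    and "dim (UNIV :: 'b::banach set) = 1"
  shows "(\<exists>T :: 'b \<Rightarrow> ('k \<Rightarrow>\<^sub>C real). U_embedding T) \<longleftrightarrow>
         (\<exists>p :: 'k. gdelta_in euclidean {p})"
proof -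
  obtain e :: 'b and c :: "'b \<Rightarrow>\<^sub>L real" where e: "norm e = 1" and c: "\<And>x. c x *\<^sub>R e = x"
    using one_dim_coordinate[OF assms(2)] by blast
  show ?thesis
  proof
    assume "\<exists>T :: 'b \<Rightarrow> ('k \<Rightarrow>\<^sub>C real). U_embedding T"
    then obtain T :: "'b \<Rightarrow> ('k \<Rightarrow>\<^sub>C real)" where "U_embedding T" and T: "linear_isometry T"
      by (auto simp: U_embedding_def)
    then have "norm (T e) = 1" and "\<exists>!\<phi> :: ('k \<Rightarrow>\<^sub>C real) \<Rightarrow>\<^sub>L real. norm \<phi> = 1 \<and> blinfun_apply \<phi> (T e) = 1"
      using e U_embedding_one_dim_iff[OF e c T] by (simp_all add: linear_isometry_def)
    then have "\<exists>!q. \<bar>T e q\<bar> = 1"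
      by (rule ex1_peak_if_ex1_norming_functional[OF assms(1)])
    then show "\<exists>p :: 'k. gdelta_in euclidean {p}"
      using gdelta_in_unique_peak[OF \<open>norm (T e) = 1\<close>] by blast
  next
    assume "\<exists>p :: 'k. gdelta_in euclidean {p}"
    then obtain p :: 'k and f :: "'k \<Rightarrow>\<^sub>C real" where "norm f = 1" and "\<And>x. \<bar>f x\<bar> = 1 \<longleftrightarrow> x = p"
      using peak_bcontfun_at_gdelta_point[OF compact_t2_imp_normal_space[OF assms(1)]] by metis
    then have "\<exists>!\<phi> :: ('k \<Rightarrow>\<^sub>C real) \<Rightarrow>\<^sub>L real. norm \<phi> = 1 \<and> blinfun_apply \<phi> f = 1"
      using ex1_norming_functional_if_ex1_peak[OF assms(1)] by simp
    then have "U_embedding (\<lambda>x. c x *\<^sub>R f)"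
      using U_embedding_one_dim_iff[OF e c linear_isometry_scaleR_coordinate[OF e c \<open>norm f = 1\<close>]]
        coordinate_scaleR_unit[OF e c, of 1] by simp
    then show "\<exists>T :: 'b \<Rightarrow> ('k \<Rightarrow>\<^sub>C real). U_embedding T"
      by blast
  qed
qed

end
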